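(* Let $n\ge1$ and let $r_1,\ldots,r_n$ be distinct nonzero real numbers, labeled so that $r_k>0$ for $1\le k\le p$ and $r_k<0$ for $p+1\le k\le n$, where $0\le p\le n$. Let $V=V(r_1,\ldots,r_n)$ and $V_k=V(r_1,\ldots,r_{k-1},r_{k+1},\ldots,r_n)$ for $1\le k\le n$. Then $$\frac{1}{|r_1r_2\cdots r_n|}=\frac{1}{|V|}\int_0^\infty\Big(\Big|\sum_{k=1}^p(-1)^kV_ke^{-r_kx}\Big|+\Big|\sum_{k=p+1}^n(-1)^kV_ke^{r_kx}\Big|\Big)dx,$$ where an empty sum is $0$ (so for $p=n$ the right-hand side is $\frac{1}{|V|}\int_0^\infty|\sum_{k=1}^n(-1)^kV_ke^{-r_kx}|dx$, and for $p=0$ it is $\frac{1}{|V|}\int_0^\infty|\sum_{k=1}^n(-1)^kV_ke^{r_kx}|dx$).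
   Context: For numbers $x_1,\ldots,x_m$, $V(x_1,\ldots,x_m)=\det(x_j^{i-1})_{1\le i,j\le m}=\prod_{1\le i<j\le m}(x_j-x_i)$ is the Vandermonde determinant (equal to $1$ when $m\le1$). *)

theory Defs
  imports "HOL-Analysis.Analysis"
begin

text \<open>Vandermonde determinant of the list [x_1,...,x_m], given by its product formula
  prod_{1<=i<j<=m} (x_j - x_i); equal to 1 when m <= 1.\<close>
definition vandermonde :: "real list \<Rightarrow> real" where
  "vandermonde xs = (\<Prod>j<length xs. \<Prod>i<j. xs ! j - xs ! i)"

definition rlist :: "(nat \<Rightarrow> real) \<Rightarrow> nat \<Rightarrow> real list" where
  "rlist r n = map r [1..<n+1]"

definition rlist_del :: "(nat \<Rightarrow> real) \<Rightarrow> nat \<Rightarrow> nat \<Rightarrow> real list" where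
  "rlist_del r n k = map r (filter (\<lambda>i. i \<noteq> k) [1..<n+1])"

end

theory Submission
  imports Defs
begin

(* Expanding V along the k-th node gives (-1)^k V_k = -V w_k with the partial-fraction weights
   w_k = 1 / prod_{i ~= k} (r_i - r_k); these satisfy sum_k w_k = 0 (for n >= 2) and
   sum_k w_k / r_k = 1 / prod_k r_k.  For the exponential sum F(x) = sum_{k <= p} w_k exp (-r_k x),
   the derivative of exp (r_m x) F(x) is exp (r_m x) times the analogous sum with the node r_m
   removed.  Adding first the positive and then the negative nodes one at a time therefore shows
   (-1)^(n-p) F >= 0 on [0, oo): for a positive node, exp (r_m x) F increases from its value
   sum_k w_k >= 0 at x = 0; for a negative node it is monotone and tends to 0 at infinity.
   Applied also to -r, this fixes the signs of both sums on [0, oo), so the absolute values can be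
   dropped and the integral is (-1)^(n-p) sum_k w_k / r_k = 1 / |prod_k r_k|. *)

section \<open>Partial-fraction weights\<close>

definition weight :: "('i \<Rightarrow> real) \<Rightarrow> 'i set \<Rightarrow> 'i \<Rightarrow> real" where
  "weight r S k = 1 / (\<Prod>i\<in>S - {k}. r i - r k)"

definition exp_sum :: "('i \<Rightarrow> real) \<Rightarrow> 'i set \<Rightarrow> 'i set \<Rightarrow> real \<Rightarrow> real" where
  "exp_sum r S P x = (\<Sum>k\<in>P. weight r S k * exp (- r k * x))"

lemma weight_remove:
  assumes "finite S" "inj_on r S" "j \<in> S" "k \<in> S" "k \<noteq> j"
  shows "weight r S k * (r j - r k) = weight r (S - {j}) k"
proof -
  have S: "S - {k} = insert j (S - {j} - {k})"
    using assms by auto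
  have "r j - r k \<noteq> 0"
    using assms by (auto dest: inj_onD)
  then show ?thesis
    unfolding weight_def using assms by (subst S, subst prod.insert) auto
qed

lemma weight_uminus:
  assumes "finite S" "k \<in> S"
  shows "weight (\<lambda>i. - r i) S k = (-1) ^ (card S - 1) * weight r S k"
proof -
  have "(\<Prod>i\<in>S - {k}. - r i - - r k) = (-1) ^ (card S - 1) * (\<Prod>i\<in>S - {k}. r i - r k)"
    using prod_uminus[of "\<lambda>i. r i - r k" "S - {k}"] assms by simp
  then show ?thesis
    unfolding weight_def by (simp add: power_one_over[symmetric] divide_simps)
qed

lemma sum_weight_remove:
  assumes "finite S" "inj_on r S" "j \<in> S"
  shows "(\<Sum>k\<in>S - {j}. weight r (S - {j}) k) = (\<Sum>k\<in>S. weight r S k * (r j - r k))"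
proof -
  have "(\<Sum>k\<in>S. weight r S k * (r j - r k)) = (\<Sum>k\<in>S - {j}. weight r S k * (r j - r k))"
    using assms by (simp add: sum.remove)
  also have "\<dots> = (\<Sum>k\<in>S - {j}. weight r (S - {j}) k)"
    using assms weight_remove by (intro sum.cong) auto
  finally show ?thesis by simp
qed

lemma sum_weight:
  assumes "finite S" "inj_on r S" "S \<noteq> {}"
  shows "(\<Sum>k\<in>S. weight r S k) = (if card S = 1 then 1 else 0)"
  using assms
proof (induction "card S" arbitrary: S rule: less_induct)
  case less
  show ?case
  proof (cases "card S = 1")
    case True
    then obtain l where "S = {l}"
      by (auto simp: card_1_singleton_iff)
    then show ?thesis
      by (simp add: weight_def)
  next
    case False
    obtain j where j: "j \<in> S"
      using less.prems by blast
    with False have "S \<noteq> {j}"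
      by auto
    with j obtain l where jl: "j \<in> S" "l \<in> S" "j \<noteq> l"
      by blast
    have "(r l - r j) * (\<Sum>k\<in>S. weight r S k)
        = (\<Sum>k\<in>S - {l}. weight r (S - {l}) k) - (\<Sum>k\<in>S - {j}. weight r (S - {j}) k)"
      unfolding sum_weight_remove[OF less.prems(1,2) jl(1)] sum_weight_remove[OF less.prems(1,2) jl(2)]
        sum_distrib_left sum_subtractf[symmetric]
      by (intro sum.cong) (simp_all add: algebra_simps)
    also have "\<dots> = 0"
    proof -
      have "(\<Sum>k\<in>S - {i}. weight r (S - {i}) k) = (if card S - 1 = 1 then 1 else 0)"
        if "i \<in> S" for i
      proof -
        have "S - {i} \<noteq> {}" "inj_on r (S - {i})" "card (S - {i}) < card S"
          using that jl less.prems by (auto intro: inj_on_subset simp: card_gt_0_iff)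
        then show ?thesis
          using less.hyps[of "S - {i}"] less.prems(1) that by simp
      qed
      then show ?thesis
        using jl by simp
    qed
    finally show ?thesis
      using False jl less.prems(2) by (auto dest: inj_onD)
  qed
qed

lemma sum_weight_div_eq:
  assumes "finite S" "S \<noteq> {}" "inj_on r S" "\<forall>k\<in>S. r k \<noteq> 0"
  shows "(\<Sum>k\<in>S. weight r S k / r k) = 1 / (\<Prod>k\<in>S. r k)"
  using assms
proof (induction S rule: finite_ne_induct)
  case (singleton j)
  then show ?case
    by (simp add: weight_def)
next
  case (insert j S)
  let ?T = "insert j S"
  have inj: "inj_on r S"
    using insert.prems by (auto intro: inj_on_subset)
  \<comment> \<open>partial fractions: \<open>1 / (r\<^sub>k (r\<^sub>j - r\<^sub>k)) = (1 / r\<^sub>k + 1 / (r\<^sub>j - r\<^sub>k)) / r\<^sub>j\<close>\<close>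
  have "weight r ?T k / r k = (weight r S k / r k + weight r ?T k) / r j" if "k \<in> S" for k
  proof -
    have "r j - r k \<noteq> 0"
      using that insert by (auto dest: inj_onD)
    moreover have "weight r ?T k * (r j - r k) = weight r S k"
      using weight_remove[of ?T r j k] that insert by auto
    ultimately show ?thesis
      using that insert.prems by (simp add: field_simps)
  qed
  then have "(\<Sum>k\<in>?T. weight r ?T k / r k)
      = weight r ?T j / r j + ((\<Sum>k\<in>S. weight r S k / r k) + (\<Sum>k\<in>S. weight r ?T k)) / r j"
    using insert.hyps by (simp add: sum.distrib sum_divide_distrib[symmetric])
  also have "\<dots> = ((\<Sum>k\<in>?T. weight r ?T k) + 1 / (\<Prod>k\<in>S. r k)) / r j"
    using insert inj by (simp add: add_divide_distrib)
  also have "(\<Sum>k\<in>?T. weight r ?T k) = 0"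
    using sum_weight[of ?T r] insert by simp
  also have "(0 + 1 / (\<Prod>k\<in>S. r k)) / r j = 1 / (\<Prod>k\<in>?T. r k)"
    using insert.hyps by simp
  finally show ?case .
qed

section \<open>Signs and integrals of exponential sums\<close>

lemma exp_mult_exp_sum:
  "exp (c * x) * exp_sum r S P x = (\<Sum>k\<in>P. weight r S k * exp ((c - r k) * x))"
  unfolding exp_sum_def sum_distrib_left
  by (intro sum.cong) (simp_all add: exp_add[symmetric] algebra_simps)

lemma exp_mult_exp_sum_has_real_derivative:
  assumes "finite S" "inj_on r S" "P \<subseteq> S" "j \<in> S"
  shows "((\<lambda>y. exp (r j * y) * exp_sum r S P y)
           has_real_derivative exp (r j * x) * exp_sum r (S - {j}) (P - {j}) x) (at x)"
proof -
  have "((\<lambda>y. \<Sum>k\<in>P. weight r S k * exp ((r j - r k) * y)) has_real_derivative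
          (\<Sum>k\<in>P. weight r S k * (r j - r k) * exp ((r j - r k) * x))) (at x)"
    by (auto intro!: derivative_eq_intros simp: algebra_simps)
  also have "(\<Sum>k\<in>P. weight r S k * (r j - r k) * exp ((r j - r k) * x))
      = (\<Sum>k\<in>P - {j}. weight r (S - {j}) k * exp ((r j - r k) * x))"
    using assms weight_remove[of S r j]
    by (intro sum.mono_neutral_cong_right) (auto intro: finite_subset)
  finally show ?thesis
    by (simp only: exp_mult_exp_sum)
qed

lemma exp_sum_self_nonneg:
  assumes "finite S" "inj_on r S" "x \<ge> 0"
  shows "exp_sum r S S x \<ge> 0"
  using assms
proof (induction S arbitrary: x rule: finite_induct)
  case empty
  then show ?case
    by (simp add: exp_sum_def)
next
  case (insert j S)
  let ?T = "insert j S"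
  let ?g = "\<lambda>y. exp (r j * y) * exp_sum r ?T ?T y"
  have "inj_on r S"
    using insert.prems by (auto intro: inj_on_subset)
  then have IH: "0 \<le> exp_sum r S S y" if "0 \<le> y" for y
    using insert.IH that by simp
  have "0 \<le> ?g 0"
    using sum_weight[of ?T r] insert by (simp add: exp_sum_def)
  also have "?g 0 \<le> ?g x"
    by (rule deriv_nonneg_imp_mono[OF exp_mult_exp_sum_has_real_derivative[of ?T r ?T j]])
      (use insert IH in auto)
  finally show ?case
    by (simp add: zero_le_mult_iff)
qed

lemma exp_sum_sign:
  assumes "finite N" "finite P" "P \<inter> N = {}" "inj_on r (P \<union> N)"
    and "\<forall>k\<in>P. r k > 0" "\<forall>k\<in>N. r k < 0" "x \<ge> 0"
  shows "(-1) ^ card N * exp_sum r (P \<union> N) P x \<ge> 0"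
  using assms
proof (induction N arbitrary: x rule: finite_induct)
  case empty
  then show ?case
    using exp_sum_self_nonneg by simp
next
  case (insert m N)
  let ?S = "P \<union> insert m N"
  let ?h = "\<lambda>y. (-1) ^ card N * (exp (r m * y) * exp_sum r ?S P y)"
  have S_m: "?S - {m} = P \<union> N" "P - {m} = P"
    using insert by auto
  have "inj_on r (P \<union> N)"
    using insert.prems by (auto intro: inj_on_subset)
  then have IH: "0 \<le> (-1) ^ card N * exp_sum r (P \<union> N) P y" if "y \<ge> 0" for y
    using insert that by simp
  have deriv: "(?h has_real_derivative (-1) ^ card N * (exp (r m * z) * exp_sum r (P \<union> N) P z)) (at z)"
    for z
    using exp_mult_exp_sum_has_real_derivative[of ?S r P m z] insert
    unfolding S_m by (intro DERIV_cmult) blast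
  have deriv_nonneg: "0 \<le> (-1) ^ card N * (exp (r m * z) * exp_sum r (P \<union> N) P z)" if "z \<ge> 0" for z
    using IH[OF that] by (simp add: mult.left_commute[of _ "exp _"])
  have mono: "?h x \<le> ?h y" if "x \<le> y" for y
    by (rule deriv_nonneg_imp_mono[OF deriv deriv_nonneg]) (use that insert.prems in auto)
  have "((\<lambda>y. \<Sum>k\<in>P. weight r ?S k * exp ((r m - r k) * y)) \<longlongrightarrow> 0) at_top"
  proof (intro tendsto_null_sum tendsto_mult_right_zero)
    fix k
    assume "k \<in> P"
    then have "r m - r k < 0"
      using insert.prems by force
    then show "((\<lambda>y. exp ((r m - r k) * y)) \<longlongrightarrow> 0) at_top"
      by (intro filterlim_compose[OF exp_at_bot] filterlim_tendsto_neg_mult_at_bot[OF tendsto_const]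
          filterlim_ident)
  qed
  then have "(?h \<longlongrightarrow> 0) at_top"
    by (simp add: exp_mult_exp_sum tendsto_mult_right_zero)
  moreover have "eventually (\<lambda>y. ?h x \<le> ?h y) at_top"
    using mono unfolding eventually_at_top_linorder by blast
  ultimately have "?h x \<le> 0"
    by (simp add: tendsto_lowerbound)
  then have "exp (r m * x) * ((-1) ^ card N * exp_sum r ?S P x) \<le> 0"
    by (simp only: mult.left_commute)
  then have "(-1) ^ card N * exp_sum r ?S P x \<le> 0"
    by (simp add: mult_le_0_iff)
  then show ?case
    using insert.hyps by simp
qed

lemma abs_exp_sum_has_integral:
  assumes "finite N" "finite P" "P \<inter> N = {}" "inj_on r (P \<union> N)"
    and "\<forall>k\<in>P. r k > 0" "\<forall>k\<in>N. r k < 0"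
  shows "((\<lambda>x. \<bar>exp_sum r (P \<union> N) P x\<bar>)
           has_integral (-1) ^ card N * (\<Sum>k\<in>P. weight r (P \<union> N) k / r k)) {0..}"
proof -
  have "(exp_sum r (P \<union> N) P has_integral (\<Sum>k\<in>P. weight r (P \<union> N) k / r k)) {0..}"
    unfolding exp_sum_def[abs_def]
  proof (intro has_integral_sum[OF \<open>finite P\<close>])
    fix k
    assume "k \<in> P"
    then have "((\<lambda>x. exp (- r k * x)) has_integral 1 / r k) {0..}"
      using has_integral_exp_minus_to_infinity[of "r k" 0] assms(5) by simp
    then have "((\<lambda>x. weight r (P \<union> N) k * exp (- r k * x)) has_integral weight r (P \<union> N) k * (1 / r k)) {0..}"
      by (rule has_integral_mult_right)
    then show "((\<lambda>x. weight r (P \<union> N) k * exp (- r k * x)) has_integral weight r (P \<union> N) k / r k) {0..}"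
      by simp
  qed
  then have "((\<lambda>x. (-1) ^ card N * exp_sum r (P \<union> N) P x)
               has_integral (-1) ^ card N * (\<Sum>k\<in>P. weight r (P \<union> N) k / r k)) {0..}"
    by (rule has_integral_mult_right)
  moreover have "\<bar>exp_sum r (P \<union> N) P x\<bar> = (-1) ^ card N * exp_sum r (P \<union> N) P x"
    if "x \<in> {0..}" for x
  proof -
    have "\<bar>exp_sum r (P \<union> N) P x\<bar> = \<bar>(-1) ^ card N * exp_sum r (P \<union> N) P x\<bar>"
      by (simp add: abs_mult)
    also have "\<dots> = (-1) ^ card N * exp_sum r (P \<union> N) P x"
      using exp_sum_sign[OF assms, of x] that by simp
    finally show ?thesis .
  qed
  ultimately show ?thesis
    by (rule has_integral_cong[THEN iffD2, rotated])
qed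

lemma abs_exp_sum_reflected_has_integral:
  assumes "finite N" "finite P" "P \<inter> N = {}" "inj_on r (P \<union> N)"
    and "\<forall>k\<in>P. r k > 0" "\<forall>k\<in>N. r k < 0"
  shows "((\<lambda>x. \<bar>\<Sum>k\<in>N. weight r (P \<union> N) k * exp (r k * x)\<bar>)
           has_integral (-1) ^ card N * (\<Sum>k\<in>N. weight r (P \<union> N) k / r k)) {0..}"
proof -
  let ?S = "P \<union> N"
  have card_S: "card ?S = card P + card N"
    using assms(1-3) by (simp add: card_Un_disjoint)
  have "((\<lambda>x. \<bar>exp_sum (\<lambda>i. - r i) (N \<union> P) N x\<bar>)
          has_integral (-1) ^ card P * (\<Sum>k\<in>N. weight (\<lambda>i. - r i) (N \<union> P) k / - r k)) {0..}"
  proof (rule abs_exp_sum_has_integral)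
    show "inj_on (\<lambda>i. - r i) (N \<union> P)"
      using assms(4) unfolding inj_on_def by (simp add: Un_commute)
  qed (use assms in auto)
  moreover have "\<bar>exp_sum (\<lambda>i. - r i) (N \<union> P) N x\<bar> = \<bar>\<Sum>k\<in>N. weight r ?S k * exp (r k * x)\<bar>" for x
  proof -
    have "exp_sum (\<lambda>i. - r i) (N \<union> P) N x = (-1) ^ (card ?S - 1) * (\<Sum>k\<in>N. weight r ?S k * exp (r k * x))"
      unfolding exp_sum_def sum_distrib_left
      using assms(1,2) weight_uminus[of ?S _ r] by (intro sum.cong) (auto simp: Un_commute)
    then show ?thesis
      by (simp add: abs_mult)
  qed
  moreover have "(-1) ^ card P * (\<Sum>k\<in>N. weight (\<lambda>i. - r i) (N \<union> P) k / - r k)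
      = (-1) ^ card N * (\<Sum>k\<in>N. weight r ?S k / r k)"
    unfolding sum_distrib_left
  proof (rule sum.cong)
    fix k
    assume "k \<in> N"
    then have "card ?S > 0"
      using assms(1,2) by (auto simp: card_gt_0_iff)
    then obtain c where c: "card ?S = Suc c"
      using gr0_implies_Suc by blast
    have "weight (\<lambda>i. - r i) (N \<union> P) k / - r k = (-1) ^ card ?S * (weight r ?S k / r k)"
      using weight_uminus[of ?S k r] \<open>k \<in> N\<close> assms(1,2) c by (simp add: Un_commute)
    also have "(-1::real) ^ card ?S = (-1) ^ card P * (-1) ^ card N"
      unfolding card_S by (rule power_add)
    finally show "(-1) ^ card P * (weight (\<lambda>i. - r i) (N \<union> P) k / - r k)
        = (-1) ^ card N * (weight r ?S k / r k)"
      by (simp flip: power_mult_distrib)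
  qed simp
  ultimately show ?thesis
    by simp
qed

lemma abs_prod_pos_neg:
  assumes "finite P" "finite N" "P \<inter> N = {}" "\<forall>k\<in>P. r k > 0" "\<forall>k\<in>N. r k < 0"
  shows "\<bar>\<Prod>k\<in>P \<union> N. r k\<bar> = (-1) ^ card N * (\<Prod>k\<in>P \<union> N. (r k :: real))"
proof -
  have "\<bar>\<Prod>k\<in>P \<union> N. r k\<bar> = (\<Prod>k\<in>P. \<bar>r k\<bar>) * (\<Prod>k\<in>N. \<bar>r k\<bar>)"
    unfolding abs_prod using assms(1-3) by (rule prod.union_disjoint)
  also have "\<dots> = (\<Prod>k\<in>P. r k) * (\<Prod>k\<in>N. - r k)"
    using assms(4,5) by (intro arg_cong2[where f = times] prod.cong) auto
  also have "\<dots> = (-1) ^ card N * (\<Prod>k\<in>P \<union> N. r k)"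
    using assms(1-3) by (simp add: prod_uminus prod.union_disjoint)
  finally show ?thesis .
qed

lemma abs_exp_sums_has_integral:
  assumes "finite N" "finite P" "P \<inter> N = {}" "P \<union> N \<noteq> {}" "inj_on r (P \<union> N)"
    and "\<forall>k\<in>P. r k > 0" "\<forall>k\<in>N. r k < 0"
  shows "((\<lambda>x. \<bar>exp_sum r (P \<union> N) P x\<bar> + \<bar>\<Sum>k\<in>N. weight r (P \<union> N) k * exp (r k * x)\<bar>)
           has_integral 1 / \<bar>\<Prod>k\<in>P \<union> N. r k\<bar>) {0..}"
proof -
  note hyps = assms(1-3,5-7)
  have "(-1) ^ card N * (\<Sum>k\<in>P. weight r (P \<union> N) k / r k)
          + (-1) ^ card N * (\<Sum>k\<in>N. weight r (P \<union> N) k / r k)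
      = (-1) ^ card N * (\<Sum>k\<in>P \<union> N. weight r (P \<union> N) k / r k)"
    by (simp only: sum.union_disjoint[OF assms(2,1,3)] distrib_left)
  also have "\<dots> = (-1) ^ card N * (1 / (\<Prod>k\<in>P \<union> N. r k))"
    using assms by (subst sum_weight_div_eq) auto
  also have "\<dots> = 1 / \<bar>\<Prod>k\<in>P \<union> N. r k\<bar>"
    unfolding abs_prod_pos_neg[OF assms(2,1,3,6,7)] by (cases "even (card N)") simp_all
  finally show ?thesis
    using has_integral_add[OF abs_exp_sum_has_integral[OF hyps] abs_exp_sum_reflected_has_integral[OF hyps]]
    by simp
qed

section \<open>Vandermonde determinants over index sets\<close>

definition vandermonde_on :: "('a::linorder \<Rightarrow> real) \<Rightarrow> 'a set \<Rightarrow> real" where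
  "vandermonde_on r A = (\<Prod>j\<in>A. \<Prod>i\<in>{i\<in>A. i < j}. r j - r i)"

lemma vandermonde_snoc:
  "vandermonde (xs @ [y]) = vandermonde xs * (\<Prod>i<length xs. y - xs ! i)"
proof -
  let ?ys = "xs @ [y]"
  have "vandermonde ?ys
      = (\<Prod>j<length xs. \<Prod>i<j. ?ys ! j - ?ys ! i) * (\<Prod>i<length xs. ?ys ! length xs - ?ys ! i)"
    unfolding vandermonde_def by (simp add: prod.lessThan_Suc)
  also have "(\<Prod>j<length xs. \<Prod>i<j. ?ys ! j - ?ys ! i) = vandermonde xs"
    unfolding vandermonde_def by (auto simp: nth_append intro!: prod.cong)
  also have "(\<Prod>i<length xs. ?ys ! length xs - ?ys ! i) = (\<Prod>i<length xs. y - xs ! i)"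
    by (auto simp: nth_append intro!: prod.cong)
  finally show ?thesis .
qed

lemma vandermonde_on_insert_greatest:
  assumes "finite A" "\<forall>i\<in>A. i < x"
  shows "vandermonde_on r (insert x A) = vandermonde_on r A * (\<Prod>i\<in>A. r x - r i)"
proof -
  have "x \<notin> A" "{i \<in> insert x A. i < x} = A"
    using assms by auto
  moreover have "{i \<in> insert x A. i < j} = {i \<in> A. i < j}" if "j \<in> A" for j
    using assms that by auto
  ultimately show ?thesis
    unfolding vandermonde_on_def using assms(1) by (simp add: mult.commute)
qed

lemma vandermonde_map_sorted:
  "sorted_wrt (<) xs \<Longrightarrow> vandermonde (map r xs) = vandermonde_on r (set xs)"
proof (induction xs rule: rev_induct)
  case Nil
  then show ?case
    by (simp add: vandermonde_def vandermonde_on_def)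
next
  case (snoc x xs)
  then have sorted: "sorted_wrt (<) xs" "\<forall>i\<in>set xs. i < x"
    by (auto simp: sorted_wrt_append)
  then have "distinct xs"
    using strict_sorted_iff by blast
  then have "(\<Prod>i<length xs. r x - r (xs ! i)) = (\<Prod>i\<in>set xs. r x - r i)"
    using prod.reindex_bij_betw[OF bij_betw_nth[OF _ refl refl], of xs "\<lambda>i. r x - r i"] by simp
  then show ?case
    using snoc.IH[OF sorted(1)] vandermonde_on_insert_greatest[of "set xs" x r] sorted
    by (simp add: vandermonde_snoc)
qed

lemma vandermonde_on_remove:
  assumes "finite A" "k \<in> A"
  shows "vandermonde_on r A
    = (-1) ^ card {i\<in>A. i < k} * (\<Prod>i\<in>A - {k}. r i - r k) * vandermonde_on r (A - {k})"
proof -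
  let ?L = "{i\<in>A. i < k}" and ?U = "{j\<in>A. k < j}"
  have inner: "(\<Prod>i\<in>{i\<in>A. i < j}. r j - r i)
      = (if k < j then r j - r k else 1) * (\<Prod>i\<in>{i\<in>A - {k}. i < j}. r j - r i)"
    if "j \<in> A - {k}" for j
  proof (cases "k < j")
    case True
    then have "{i\<in>A. i < j} = insert k {i\<in>A - {k}. i < j}"
      using assms by auto
    then show ?thesis
      using True assms by simp
  next
    case False
    then have "{i\<in>A. i < j} = {i\<in>A - {k}. i < j}"
      by auto
    then show ?thesis
      using False by simp
  qed
  have "vandermonde_on r A
      = (\<Prod>i\<in>?L. r k - r i) * (\<Prod>j\<in>A - {k}. \<Prod>i\<in>{i\<in>A. i < j}. r j - r i)"
    unfolding vandermonde_on_def using assms by (simp add: prod.remove)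
  also have "(\<Prod>j\<in>A - {k}. \<Prod>i\<in>{i\<in>A. i < j}. r j - r i)
      = (\<Prod>j\<in>A - {k}. if k < j then r j - r k else 1) * vandermonde_on r (A - {k})"
    unfolding vandermonde_on_def prod.distrib[symmetric] by (rule prod.cong[OF refl]) (rule inner)
  also have "(\<Prod>j\<in>A - {k}. if k < j then r j - r k else 1) = (\<Prod>j\<in>?U. r j - r k)"
    using assms by (intro prod.mono_neutral_cong_right) auto
  also have "(\<Prod>i\<in>?L. r k - r i) = (-1) ^ card ?L * (\<Prod>i\<in>?L. r i - r k)"
    using prod_uminus[of "\<lambda>i. r i - r k" ?L] by simp
  also have "(\<Prod>i\<in>A - {k}. r i - r k) = (\<Prod>i\<in>?L. r i - r k) * (\<Prod>j\<in>?U. r j - r k)"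
  proof -
    have "A - {k} = ?L \<union> ?U" "?L \<inter> ?U = {}"
      by auto
    then show ?thesis
      using prod.union_disjoint[of ?L ?U "\<lambda>i. r i - r k"] assms(1) by simp
  qed
  ultimately show ?thesis
    by (simp add: mult_ac)
qed

lemma vandermonde_on_nonzero: "finite A \<Longrightarrow> inj_on r A \<Longrightarrow> vandermonde_on r A \<noteq> 0"
  unfolding vandermonde_on_def by (auto simp: prod_zero_iff dest: inj_onD)

lemma vandermonde_rlist: "vandermonde (rlist r n) = vandermonde_on r {1..n}"
proof -
  have "set [1..<n+1] = {1..n}"
    by auto
  then show ?thesis
    unfolding rlist_def using vandermonde_map_sorted[OF sorted_wrt_upt, of r 1 "n + 1"] by simp
qed

lemma vandermonde_rlist_del: "vandermonde (rlist_del r n k) = vandermonde_on r ({1..n} - {k})"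
proof -
  have "set (filter (\<lambda>i. i \<noteq> k) [1..<n+1]) = {1..n} - {k}"
    by auto
  then show ?thesis
    unfolding rlist_del_def
    using vandermonde_map_sorted[OF sorted_wrt_filter[OF sorted_wrt_upt], of r "\<lambda>i. i \<noteq> k" 1 "n + 1"]
    by simp
qed

lemma signed_vandermonde_rlist_del:
  assumes "inj_on r {1..n}" "k \<in> {1..n}"
  shows "(-1) ^ k * vandermonde (rlist_del r n k) = - vandermonde (rlist r n) * weight r {1..n} k"
proof -
  let ?D = "\<Prod>i\<in>{1..n} - {k}. r i - r k" and ?W = "vandermonde_on r ({1..n} - {k})"
  have "{i\<in>{1..n}. i < k} = {1..<k}"
    using assms(2) by auto
  then have "card {i\<in>{1..n}. i < k} = k - 1"
    by simp
  then have "- vandermonde (rlist r n) * weight r {1..n} k = - ((-1) ^ (k - 1) * ?D * ?W) / ?D"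
    unfolding vandermonde_rlist weight_def vandermonde_on_remove[OF finite_atLeastAtMost assms(2)]
    by simp
  also have "\<dots> = (-1) ^ k * ?W"
  proof -
    have "?D \<noteq> 0"
      using assms by (auto simp: prod_zero_iff dest: inj_onD)
    moreover have "(-1::real) ^ k = - ((-1) ^ (k - 1))"
      using assms(2) by (cases k) auto
    ultimately show ?thesis
      by simp
  qed
  finally show ?thesis
    by (simp add: vandermonde_rlist_del)
qed

lemma sum_signed_vandermonde_rlist_del:
  assumes "inj_on r {1..n}" "A \<subseteq> {1..n}"
  shows "(\<Sum>k\<in>A. (-1) ^ k * vandermonde (rlist_del r n k) * g k)
    = - vandermonde (rlist r n) * (\<Sum>k\<in>A. weight r {1..n} k * g k)"
  unfolding sum_distrib_left
proof (intro sum.cong refl)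
  fix k
  assume "k \<in> A"
  then have "(-1) ^ k * vandermonde (rlist_del r n k) = - vandermonde (rlist r n) * weight r {1..n} k"
    using assms by (intro signed_vandermonde_rlist_del) auto
  then show "(-1) ^ k * vandermonde (rlist_del r n k) * g k
      = - vandermonde (rlist r n) * (weight r {1..n} k * g k)"
    by simp
qed

theorem proposition1:
  fixes n p :: nat and r :: "nat \<Rightarrow> real"
  assumes "n \<ge> 1" and "p \<le> n"
    and "inj_on r {1..n}"
    and "\<And>k. 1 \<le> k \<Longrightarrow> k \<le> p \<Longrightarrow> r k > 0"
    and "\<And>k. p + 1 \<le> k \<Longrightarrow> k \<le> n \<Longrightarrow> r k < 0"
  defines "V \<equiv> vandermonde (rlist r n)"
    and "f \<equiv> \<lambda>x::real. \<bar>\<Sum>k=1..p. (-1) ^ k * vandermonde (rlist_del r n k) * exp (- r k * x)\<bar>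
                    + \<bar>\<Sum>k=p+1..n. (-1) ^ k * vandermonde (rlist_del r n k) * exp (r k * x)\<bar>"
  shows "f integrable_on {0..}
     \<and> 1 / \<bar>\<Prod>k=1..n. r k\<bar> = (1 / \<bar>V\<bar>) * integral {0..} f"
proof -
  define P N where "P = {1..p}" and "N = {p+1..n}"
  have S: "{1..n} = P \<union> N" and PN: "finite N" "finite P" "P \<inter> N = {}"
    using assms(2) by (auto simp: P_def N_def)
  have pos: "\<forall>k\<in>P. r k > 0" and neg: "\<forall>k\<in>N. r k < 0"
    using assms(4,5) by (auto simp: P_def N_def)
  have "P \<union> N \<noteq> {}"
    using assms(1) unfolding S[symmetric] by simp
  have "V \<noteq> 0"
    using vandermonde_on_nonzero[OF _ assms(3)] by (simp add: V_def vandermonde_rlist)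
  have "f = (\<lambda>x. \<bar>V\<bar> * (\<bar>exp_sum r (P \<union> N) P x\<bar>
                        + \<bar>\<Sum>k\<in>N. weight r (P \<union> N) k * exp (r k * x)\<bar>))"
    using sum_signed_vandermonde_rlist_del[OF assms(3), of P]
      sum_signed_vandermonde_rlist_del[OF assms(3), of N]
    unfolding f_def exp_sum_def V_def P_def[symmetric] N_def[symmetric] S
    by (simp add: abs_mult distrib_left)
  then have integral: "(f has_integral \<bar>V\<bar> * (1 / \<bar>\<Prod>k=1..n. r k\<bar>)) {0..}"
    using has_integral_mult_right[OF abs_exp_sums_has_integral[OF PN \<open>P \<union> N \<noteq> {}\<close>
        assms(3)[unfolded S] pos neg], of "\<bar>V\<bar>"]
    unfolding S by simp
  show ?thesis
  proof
    show "f integrable_on {0..}"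
      using integral by blast
    show "1 / \<bar>\<Prod>k=1..n. r k\<bar> = 1 / \<bar>V\<bar> * integral {0..} f"
      using integral_unique[OF integral] \<open>V \<noteq> 0\<close> by simp
  qed
qed

end
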